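(* Let $p \geq 2$ be a real number (the computational budget). Let $c_{a,1}>0$ and $c_{c,1}>0$ be constants, let $r_{a,1}:(0,\infty)\to(0,\infty)$ be a positive, decreasing, at least twice continuously differentiable function, and let $r_{c,1}:(0,\infty)\to(0,\infty)$ be a positive, increasing, at least twice continuously differentiable function. Define $$u_1:[1,p-1]\to(0,\infty),\qquad u_1(n_1)=\frac{1}{p-n_1}\Big(c_{a,1}\,r_{a,1}(n_1)+c_{c,1}\,r_{c,1}(n_1)\Big).$$ Assume that $$c_{a,1}\,r_{a,1}''(n_1)+c_{c,1}\,r_{c,1}''(n_1)>0 \quad\text{for all } n_1\in[1,p-1].$$ Then $u_1$ has a unique global minimum $n_1^*\in[1,p-1]$.
   Context: The functions $r_{a,1}$ and $r_{c,1}$ model, respectively, an accuracy rate and an evaluation-cost rate of a low-fidelity model trained with $n_1$ high-fidelity samples: for a high-fidelity model output with Pearson correlation $\rho_1(n_1)$ to the low-fidelity output and low-fidelity evaluation cost $w_1(n_1)$ (high-fidelity cost normalized to $1$), one has $1-\rho_1^2(n_1)\le c_{a,1}r_{a,1}(n_1)$ and $w_1(n_1)\le c_{c,1}r_{c,1}(n_1)$. These bounds are not needed for the statement, which concerns only $u_1$. *)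

theory Defs
  imports "HOL-Analysis.Analysis"
begin

definition u1 :: "real \<Rightarrow> real \<Rightarrow> real \<Rightarrow> (real \<Rightarrow> real) \<Rightarrow> (real \<Rightarrow> real) \<Rightarrow> real \<Rightarrow> real" where
  "u1 p ca cc ra rc n = (ca * ra n + cc * rc n) / (p - n)"

end

theory Submission
  imports Defs
begin

text \<open>The numerator f = ca ra + cc rc is strictly convex on [1, p-1] because its second
  derivative is positive there, and the denominator p - n is affine and positive. If two points
  a < b both minimised f n / (p - n) with minimum value t, then f a = t (p - a) and
  f b = t (p - b), so strict convexity at the midpoint m gives f m < t (p - m), i.e. a value
  below t. A minimiser exists by continuity on a compact interval.\<close>

lemma midpoint_strict_convex_if_deriv_strict_mono:
  fixes f f' :: "real \<Rightarrow> real"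
  assumes "a < b"
    and deriv: "\<And>x. a \<le> x \<Longrightarrow> x \<le> b \<Longrightarrow> (f has_real_derivative f' x) (at x)"
    and mono: "\<And>x y. a \<le> x \<Longrightarrow> x < y \<Longrightarrow> y \<le> b \<Longrightarrow> f' x < f' y"
  shows "f ((a + b) / 2) < (f a + f b) / 2"
proof -
  define m where "m = (a + b) / 2"
  have am: "a < m" "m < b" and half: "m - a = b - m" "m - a > 0"
    using \<open>a < b\<close> by (auto simp: m_def field_simps)
  obtain z1 where z1: "a < z1" "z1 < m" "f m - f a = (m - a) * f' z1"
    using MVT2[of a m f f'] am deriv by auto
  obtain z2 where z2: "m < z2" "z2 < b" "f b - f m = (b - m) * f' z2"
    using MVT2[of m b f f'] am deriv by auto
  have "f' z1 < f' z2"
    using mono[of z1 z2] z1 z2 by auto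
  then have "f m - f a < f b - f m"
    using z1 z2 half by (metis mult_strict_left_mono)
  then show ?thesis
    by (simp add: m_def)
qed

lemma ex1_minimizer_of_ratio_to_affine:
  fixes f :: "real \<Rightarrow> real"
  assumes "lo \<le> hi" "hi < p"
    and cont: "continuous_on {lo..hi} f"
    and convex: "\<And>a b. lo \<le> a \<Longrightarrow> a < b \<Longrightarrow> b \<le> hi \<Longrightarrow> f ((a + b) / 2) < (f a + f b) / 2"
  shows "\<exists>!n. n \<in> {lo..hi} \<and> (\<forall>m\<in>{lo..hi}. f n / (p - n) \<le> f m / (p - m))"
proof -
  define u where "u n = f n / (p - n)" for n
  have "continuous_on {lo..hi} u"
    unfolding u_def using cont \<open>hi < p\<close> by (auto intro!: continuous_intros)
  then obtain n where n: "n \<in> {lo..hi}" "\<forall>m\<in>{lo..hi}. u n \<le> u m"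
    using continuous_attains_inf[OF compact_Icc _ \<open>continuous_on {lo..hi} u\<close>] \<open>lo \<le> hi\<close>
    by auto
  have unique: "a = b"
    if a: "a \<in> {lo..hi}" "\<forall>m\<in>{lo..hi}. u a \<le> u m"
      and b: "b \<in> {lo..hi}" "\<forall>m\<in>{lo..hi}. u b \<le> u m"
      and "a \<le> b" for a b
  proof (rule ccontr)
    assume "a \<noteq> b"
    define t where "t = u a"
    define m where "m = (a + b) / 2"
    have ub: "u b = t"
      using a b by (auto simp: t_def intro: order.antisym)
    have pos: "p - a > 0" "p - b > 0" "p - m > 0"
      using a b \<open>hi < p\<close> by (auto simp: m_def)
    have "m \<in> {lo..hi}"
      using a b by (auto simp: m_def)
    then have "t \<le> u m"
      using a by (simp add: t_def)
    then have "t * (p - m) \<le> f m"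
      using pos by (simp add: u_def field_simps)
    moreover have "f m < (f a + f b) / 2"
      using convex[of a b] a b \<open>a \<le> b\<close> \<open>a \<noteq> b\<close> by (simp add: m_def)
    moreover have "(f a + f b) / 2 = t * (p - m)"
      using ub pos by (simp add: t_def u_def m_def field_simps)
    ultimately show False
      by linarith
  qed
  show ?thesis
    unfolding u_def[symmetric]
    using n unique by (metis linear)
qed

theorem proposition1:
  fixes p ca cc :: real
    and ra ra' ra'' rc rc' rc'' :: "real \<Rightarrow> real"
  assumes hp: "p \<ge> 2"
    and hca: "ca > 0" and hcc: "cc > 0"
    and ra_pos: "\<And>x. x > 0 \<Longrightarrow> ra x > 0"
    and ra_dec: "\<And>x y. 0 < x \<Longrightarrow> x \<le> y \<Longrightarrow> ra y \<le> ra x"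
    and ra_d1: "\<And>x. x > 0 \<Longrightarrow> (ra has_real_derivative ra' x) (at x)"
    and ra_d2: "\<And>x. x > 0 \<Longrightarrow> (ra' has_real_derivative ra'' x) (at x)"
    and ra_c2: "continuous_on {0<..} ra''"
    and rc_pos: "\<And>x. x > 0 \<Longrightarrow> rc x > 0"
    and rc_inc: "\<And>x y. 0 < x \<Longrightarrow> x \<le> y \<Longrightarrow> rc x \<le> rc y"
    and rc_d1: "\<And>x. x > 0 \<Longrightarrow> (rc has_real_derivative rc' x) (at x)"
    and rc_d2: "\<And>x. x > 0 \<Longrightarrow> (rc' has_real_derivative rc'' x) (at x)"
    and rc_c2: "continuous_on {0<..} rc''"
    and convex: "\<And>n. n \<in> {1..p-1} \<Longrightarrow> ca * ra'' n + cc * rc'' n > 0"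
  shows "\<exists>!n. n \<in> {1..p-1} \<and> (\<forall>m\<in>{1..p-1}. u1 p ca cc ra rc n \<le> u1 p ca cc ra rc m)"
proof -
  define f where "f n = ca * ra n + cc * rc n" for n
  define f' where "f' n = ca * ra' n + cc * rc' n" for n
  have f_deriv: "(f has_real_derivative f' x) (at x)" if "x > 0" for x
    unfolding f_def f'_def using that by (auto intro!: derivative_eq_intros ra_d1 rc_d1)
  have f'_deriv: "(f' has_real_derivative ca * ra'' x + cc * rc'' x) (at x)" if "x > 0" for x
    unfolding f'_def using that by (auto intro!: derivative_eq_intros ra_d2 rc_d2)
  have f'_strict_mono: "f' x < f' y" if "1 \<le> x" "x < y" "y \<le> p - 1" for x y
    using that by (intro DERIV_pos_imp_increasing[of x y f']) (auto intro!: f'_deriv convex exI)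
  have "continuous_on {1..p-1} f"
    by (rule continuous_at_imp_continuous_on) (auto intro!: DERIV_isCont f_deriv)
  moreover have "f ((a + b) / 2) < (f a + f b) / 2" if "1 \<le> a" "a < b" "b \<le> p - 1" for a b
    using that by (intro midpoint_strict_convex_if_deriv_strict_mono[of a b f f'])
      (auto intro!: f_deriv f'_strict_mono)
  ultimately have "\<exists>!n. n \<in> {1..p-1} \<and> (\<forall>m\<in>{1..p-1}. f n / (p - n) \<le> f m / (p - m))"
    using hp by (intro ex1_minimizer_of_ratio_to_affine) auto
  then show ?thesis
    by (simp add: u1_def f_def)
qed

end
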